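(* Consider the following posets $P$ with typings $t$ (each typing is surjective onto $\mathbb{N}$): (i) $\mathbb{N}$ under divisibility, with $t(n,m)=m/n$ for $n\mid m$; (ii) the finite subsets $\mathscr{F}(\mathbb{N})$ of $\mathbb{N}$ under inclusion, with $t(S,T)=|T|-|S|+1$ for $S\subseteq T$; (iii) the finite-dimensional subspaces $\mathscr{V}(\mathbb{F}_q^\infty)$ of $\mathbb{F}_q^\infty$ under inclusion, with $t(U,V)=\dim V-\dim U+1$ for $U\subseteq V$; (iv) $\mathbb{N}$ under the usual order $\leqslant$, with $t(n,m)=m-n+1$ for $n\leqslant m$. Then the posets (i), (ii), (iii) have the reduced Möbius uncertainty property $\mathcal{R}$, while the poset (iv) does not.
   Context: Let $P$ be a locally finite poset. A typing is a map $t:P\times P\to\mathbb{N}\cup\{0\}$ with $t(x,y)\neq0$ iff $x\leqslant y$, such that the convolution $(f_1*f_2)(x,y)=\sum_{x\leqslant z\leqslant y}f_1(x,z)f_2(z,y)$ of two functions whose values depend only on $t(x,y)$ again depends only on $t(x,y)$. For a surjective typing, let $\left[\begin{smallmatrix} n\\ d\ \ k\end{smallmatrix}\right]$ denote the number of $z$ in an interval $[x,y]$ of type $n$ with $[x,z]$ of type $d$ and $[z,y]$ of type $k$ (independent of the choice of interval). $(P,t)$ has property $\mathcal{R}$ if for all functions $f,g:\mathbb{N}\to\mathbb{C}$, neither identically zero, satisfying $g(n)=\sum_{d,k\in\mathbb{N}}\left[\begin{smallmatrix} n\\ d\ \ k\end{smallmatrix}\right] f(k)$ for all $n\in\mathbb{N}$,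 at least one of $\{n: f(n)\neq 0\}$ and $\{n:g(n)\neq0\}$ is infinite. Concretely, the relation $g=\zeta*f$ reads: in (i) $g(n)=\sum_{d\mid n}f(d)$; in (ii) $g(n)=\sum_{k=1}^n\binom{n-1}{k-1}f(k)$; in (iii) $g(n)=\sum_{k=1}^n\binom{n-1}{k-1}_q f(k)$ with the Gaussian binomial coefficient; in (iv) $g(n)=\sum_{k=1}^n f(k)$. *)

theory Defs
  imports Complex_Main "HOL-Computational_Algebra.Primes"
begin

text \<open>Types are positive naturals. A bracket function brk n d k gives the number of
  z in an interval of type n with [x,z] of type d and [z,y] of type k.
  In all four posets the types of subintervals of an interval of type n lie in 1..n,
  so the (a priori infinite) sum over d, k reduces to 1..n.\<close>

definition propR :: "(nat \<Rightarrow> nat \<Rightarrow> nat \<Rightarrow> nat) \<Rightarrow> bool" where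
  "propR brk \<longleftrightarrow>
     (\<forall>f g :: nat \<Rightarrow> complex.
        (\<exists>n\<ge>1. f n \<noteq> 0) \<longrightarrow> (\<exists>n\<ge>1. g n \<noteq> 0) \<longrightarrow>
        (\<forall>n\<ge>1. g n = (\<Sum>d\<in>{1..n}. \<Sum>k\<in>{1..n}. of_nat (brk n d k) * f k)) \<longrightarrow>
        infinite {n. n \<ge> 1 \<and> f n \<noteq> 0} \<or> infinite {n. n \<ge> 1 \<and> g n \<noteq> 0})"

fun qbinom :: "nat \<Rightarrow> nat \<Rightarrow> nat \<Rightarrow> nat" where
  "qbinom q n 0 = 1"
| "qbinom q 0 (Suc k) = 0"
| "qbinom q (Suc n) (Suc k) = qbinom q n k + q ^ (Suc k) * qbinom q n (Suc k)"

text \<open>(i) divisibility poset, t(n,m) = m/n.\<close>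
definition brk_div :: "nat \<Rightarrow> nat \<Rightarrow> nat \<Rightarrow> nat" where
  "brk_div n d k = (if d * k = n then 1 else 0)"

text \<open>(ii) finite subsets of N, t(S,T) = |T|-|S|+1.\<close>
definition brk_fin :: "nat \<Rightarrow> nat \<Rightarrow> nat \<Rightarrow> nat" where
  "brk_fin n d k = (if d \<ge> 1 \<and> k \<ge> 1 \<and> d + k = n + 1 then (n - 1) choose (d - 1) else 0)"

text \<open>(iii) finite-dimensional subspaces of F_q^infinity, t(U,V) = dim V - dim U + 1.\<close>
definition brk_vec :: "nat \<Rightarrow> nat \<Rightarrow> nat \<Rightarrow> nat \<Rightarrow> nat" where
  "brk_vec q n d k = (if d \<ge> 1 \<and> k \<ge> 1 \<and> d + k = n + 1 then qbinom q (n - 1) (d - 1) else 0)"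

text \<open>(iv) N with usual order, t(n,m) = m-n+1.\<close>
definition brk_ord :: "nat \<Rightarrow> nat \<Rightarrow> nat \<Rightarrow> nat" where
  "brk_ord n d k = (if d \<ge> 1 \<and> k \<ge> 1 \<and> d + k = n + 1 then 1 else 0)"

end

theory Submission
  imports Defs
begin

text \<open>Suppose f and g = \<zeta> * f are both finitely supported, f below N. In (i), g(n) is the sum
  of f over the divisors of n; a prime p > N adds no divisor in the support of f, so
  g(np) = g(n), and g vanishes because g(np) = 0 for large p. In (ii) and (iii),
  g(m + 1) = sum over i of [m, i]_q f(m + 1 - i), and the q-Pascal rule makes the difference
  g(m + 2) - g(m + 1) equal to q^m times the same transform of a rescaled shift of f, whose
  support is shorter by one; by induction on N, an eventually vanishing transform vanishes.
  Poset (ii) is the case q = 1 of (iii).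
  In (iv), g is the sequence of partial sums of f, and f = delta_1 - delta_2 has partial sums
  delta_1.\<close>

definition zeta_transform ::
    "(nat \<Rightarrow> nat \<Rightarrow> nat \<Rightarrow> nat) \<Rightarrow> (nat \<Rightarrow> complex) \<Rightarrow> nat \<Rightarrow> complex" where
  "zeta_transform brk f n = (\<Sum>d\<in>{1..n}. \<Sum>k\<in>{1..n}. of_nat (brk n d k) * f k)"

lemma eventually_zero_if_finite_support:
  fixes f :: "nat \<Rightarrow> 'a::zero"
  assumes "finite {n. n \<ge> 1 \<and> f n \<noteq> 0}"
  obtains N where "\<forall>k>N. f k = 0"
proof -
  obtain N where N: "\<forall>n\<in>{n. n \<ge> 1 \<and> f n \<noteq> 0}. n \<le> N"
    using assms finite_nat_set_iff_bounded_le by blast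
  have "f k = 0" if "N < k" for k
    using that N[rule_format, of k] by (cases "f k = 0") auto
  with that show ?thesis by blast
qed

lemma propR_intro:
  assumes "\<And>f N B n. \<forall>k>N. f k = 0 \<Longrightarrow> \<forall>m>B. zeta_transform brk f m = 0 \<Longrightarrow> 1 \<le> n
             \<Longrightarrow> zeta_transform brk f n = 0"
  shows "propR brk"
  unfolding propR_def
proof (intro allI impI)
  fix f g :: "nat \<Rightarrow> complex"
  assume g_nonzero: "\<exists>n\<ge>1. g n \<noteq> 0"
    and g_eq: "\<forall>n\<ge>1. g n = (\<Sum>d\<in>{1..n}. \<Sum>k\<in>{1..n}. of_nat (brk n d k) * f k)"
  show "infinite {n. n \<ge> 1 \<and> f n \<noteq> 0} \<or> infinite {n. n \<ge> 1 \<and> g n \<noteq> 0}"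
  proof (rule ccontr)
    assume "\<not> ?thesis"
    then obtain N B where f_supp: "\<forall>k>N. f k = 0" and g_supp: "\<forall>m>B. g m = 0"
      by (metis eventually_zero_if_finite_support)
    have g_zeta: "g n = zeta_transform brk f n" if "1 \<le> n" for n
      using g_eq that by (simp add: zeta_transform_def)
    have zeta_supp: "\<forall>m>B. zeta_transform brk f m = 0"
    proof (intro allI impI)
      fix m assume "B < m"
      then show "zeta_transform brk f m = 0"
        using g_supp g_zeta[of m] by simp
    qed
    have "g n = 0" if "1 \<le> n" for n
      using assms[OF f_supp zeta_supp that] g_zeta[OF that] by simp
    with g_nonzero show False by blast
  qed
qed

lemma zeta_transform_div:
  assumes "0 < n"
  shows "zeta_transform brk_div f n = (\<Sum>k | k dvd n. f k)"
proof -
  have inner: "(\<Sum>d\<in>{1..n}. of_nat (brk_div n d k) * f k) = (if k dvd n then f k else 0)"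
    if "k \<in> {1..n}" for k
  proof (cases "k dvd n")
    case True
    then have "d * k = n \<longleftrightarrow> d = n div k" for d
      using that by auto
    then have "(\<Sum>d\<in>{1..n}. of_nat (brk_div n d k) * f k)
        = (\<Sum>d\<in>{1..n}. if d = n div k then f k else 0)"
      by (intro sum.cong) (auto simp: brk_div_def)
    moreover have "n div k \<in> {1..n}"
      using True that assms by (auto simp: div_greater_zero_iff dvd_imp_le)
    ultimately show ?thesis
      using True by simp
  next
    case False
    then have "d * k \<noteq> n" for d
      by auto
    with False show ?thesis by (simp add: brk_div_def)
  qed
  have "zeta_transform brk_div f n = (\<Sum>k\<in>{1..n}. \<Sum>d\<in>{1..n}. of_nat (brk_div n d k) * f k)"
    unfolding zeta_transform_def by (rule sum.swap)
  also have "\<dots> = (\<Sum>k\<in>{1..n}. if k dvd n then f k else 0)"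
    using inner by (rule sum.cong[OF refl])
  also have "\<dots> = (\<Sum>k \<in> {k \<in> {1..n}. k dvd n}. f k)"
    by (rule sum.inter_filter[symmetric]) simp
  also have "{k \<in> {1..n}. k dvd n} = {k. k dvd n}"
    using assms by (auto intro: dvd_imp_le dvd_pos_nat)
  finally show ?thesis .
qed

lemma sum_dvd_mult_prime:
  fixes f :: "nat \<Rightarrow> 'a::comm_monoid_add"
  assumes f_supp: "\<forall>k>N. f k = 0" and p: "prime p" "N < p" and "0 < m"
  shows "(\<Sum>k | k dvd m * p. f k) = (\<Sum>k | k dvd m. f k)"
proof -
  have truncate: "(\<Sum>k | k dvd n. f k) = (\<Sum>k | k dvd n \<and> k \<le> N. f k)" if "0 < n" for n
    using that f_supp by (intro sum.mono_neutral_right) (auto intro: leI)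
  have "k dvd m * p \<longleftrightarrow> k dvd m" if "k \<le> N" for k
  proof (cases "k = 0")
    case False
    with that p have "coprime k p"
      by (metis coprime_commute dvd_imp_le le_less_trans less_irrefl neq0_conv prime_imp_coprime)
    then show ?thesis by (simp add: coprime_dvd_mult_left_iff)
  qed (use \<open>0 < m\<close> p in \<open>simp add: prime_gt_0_nat\<close>)
  then have "{k. k dvd m * p \<and> k \<le> N} = {k. k dvd m \<and> k \<le> N}"
    by blast
  with \<open>0 < m\<close> p show ?thesis
    by (simp add: truncate prime_gt_0_nat)
qed

lemma propR_div: "propR brk_div"
proof (rule propR_intro)
  fix f N B and n :: nat
  assume f_supp: "\<forall>k>N. f k = 0" and vanish: "\<forall>m>B. zeta_transform brk_div f m = 0"
    and "1 \<le> n"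
  obtain p where p: "prime p" "max N B < p"
    using bigger_prime by blast
  have "zeta_transform brk_div f n = zeta_transform brk_div f (n * p)"
    using \<open>1 \<le> n\<close> p f_supp by (simp add: zeta_transform_div prime_gt_0_nat sum_dvd_mult_prime)
  also have "\<dots> = 0"
  proof -
    have "p \<le> n * p"
      using \<open>1 \<le> n\<close> by simp
    with p(2) have "B < n * p"
      by linarith
    with vanish show ?thesis by simp
  qed
  finally show "zeta_transform brk_div f n = 0" .
qed

lemma zeta_transform_antidiagonal:
  assumes "\<And>d k. brk n d k = (if 1 \<le> d \<and> 1 \<le> k \<and> d + k = n + 1 then c d else 0)"
  shows "zeta_transform brk f n = (\<Sum>k=1..n. of_nat (c (n + 1 - k)) * f k)"
proof -
  have "(\<Sum>d=1..n. of_nat (brk n d k) * f k) = of_nat (c (n + 1 - k)) * f k"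
    if "k \<in> {1..n}" for k
  proof -
    have "(\<Sum>d=1..n. of_nat (brk n d k) * f k)
        = (\<Sum>d=1..n. if d = n + 1 - k then of_nat (c d) * f k else 0)"
      using that by (intro sum.cong) (auto simp: assms)
    also have "\<dots> = of_nat (c (n + 1 - k)) * f k"
    proof -
      have "n + 1 - k \<in> {1..n}"
        using that by auto
      then show ?thesis by simp
    qed
    finally show ?thesis .
  qed
  then show ?thesis
    unfolding zeta_transform_def by (subst sum.swap) simp
qed

lemma qbinom_eq_0: "n < k \<Longrightarrow> qbinom q n k = 0"
  by (induction q n k rule: qbinom.induct) simp_all

lemma qbinom_1: "qbinom 1 n k = n choose k"
  by (induction "1::nat" n k rule: qbinom.induct) simp_all

definition qbinomial_transform :: "nat \<Rightarrow> (nat \<Rightarrow> complex) \<Rightarrow> nat \<Rightarrow> complex" where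
  "qbinomial_transform q f m = (\<Sum>i\<le>m. of_nat (qbinom q m i) * f (m + 1 - i))"

lemma zeta_transform_vec:
  assumes "1 \<le> n"
  shows "zeta_transform (brk_vec q) f n = qbinomial_transform q f (n - 1)"
proof -
  have "zeta_transform (brk_vec q) f n = (\<Sum>k=1..n. of_nat (qbinom q (n - 1) (n + 1 - k - 1)) * f k)"
    by (rule zeta_transform_antidiagonal[where c="\<lambda>d. qbinom q (n - 1) (d - 1)"])
      (simp add: brk_vec_def)
  also have "\<dots> = (\<Sum>i\<le>n - 1. of_nat (qbinom q (n - 1) i) * f (n - i))"
    using assms by (intro sum.reindex_bij_witness[where i="\<lambda>i. n - i" and j="\<lambda>k. n - k"]) auto
  finally show ?thesis
    using assms by (simp add: qbinomial_transform_def)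
qed

lemma qbinomial_transform_Suc_diff:
  assumes "q \<noteq> 0"
  shows "qbinomial_transform q f (Suc m) - qbinomial_transform q f m
       = of_nat q ^ m * qbinomial_transform q (\<lambda>k. f (k + 1) / of_nat q ^ (k - 1)) m"
proof -
  let ?T = "qbinomial_transform q f"
  have "?T (Suc m) = f (m + 2) + (\<Sum>i\<le>m. of_nat (qbinom q (Suc m) (Suc i)) * f (m + 1 - i))"
    unfolding qbinomial_transform_def by (subst sum.atMost_Suc_shift) simp
  \<comment> \<open>q-Pascal rule: [m + 1, i + 1]_q = [m, i]_q + q^(i + 1) [m, i + 1]_q\<close>
  also have "\<dots> = ?T m + (f (m + 2)
      + (\<Sum>i\<le>m. of_nat q ^ Suc i * of_nat (qbinom q m (Suc i)) * f (m + 1 - i)))"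
    unfolding qbinomial_transform_def by (simp add: sum.distrib algebra_simps)
  also have "f (m + 2) + (\<Sum>i\<le>m. of_nat q ^ Suc i * of_nat (qbinom q m (Suc i)) * f (m + 1 - i))
      = (\<Sum>i\<le>Suc m. of_nat q ^ i * of_nat (qbinom q m i) * f (m + 2 - i))"
    by (subst sum.atMost_Suc_shift) simp
  also have "\<dots> = (\<Sum>i\<le>m. of_nat q ^ i * of_nat (qbinom q m i) * f (m + 2 - i))"
    by (simp add: qbinom_eq_0)
  also have "\<dots> = of_nat q ^ m * qbinomial_transform q (\<lambda>k. f (k + 1) / of_nat q ^ (k - 1)) m"
    unfolding qbinomial_transform_def sum_distrib_left
  proof (rule sum.cong)
    fix i assume "i \<in> {..m}"
    then have "(of_nat q :: complex) ^ m = of_nat q ^ i * of_nat q ^ (m + 1 - i - 1)"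
      and "m + 1 - i + 1 = m + 2 - i"
      by (auto simp: power_add[symmetric])
    with assms show "of_nat q ^ i * of_nat (qbinom q m i) * f (m + 2 - i)
        = of_nat q ^ m * (of_nat (qbinom q m i)
            * (f (m + 1 - i + 1) / of_nat q ^ (m + 1 - i - 1)))"
      by simp
  qed simp
  finally show ?thesis by simp
qed

lemma qbinomial_transform_eventually_zero:
  assumes q: "q \<noteq> 0" and "\<forall>k>N. f k = 0" and "\<forall>m\<ge>B. qbinomial_transform q f m = 0"
  shows "qbinomial_transform q f m = 0"
  using assms(2,3)
proof (induction N arbitrary: f m)
  case 0
  then show ?case by (simp add: qbinomial_transform_def)
next
  case (Suc N)
  define h :: "nat \<Rightarrow> complex" where "h = (\<lambda>k. f (k + 1) / of_nat q ^ (k - 1))"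
  have diff: "qbinomial_transform q f (Suc m) - qbinomial_transform q f m
      = of_nat q ^ m * qbinomial_transform q h m" for m
    unfolding h_def by (rule qbinomial_transform_Suc_diff[OF q])
  have "\<forall>k>N. h k = 0"
    using Suc.prems(1) by (simp add: h_def)
  moreover have "\<forall>m\<ge>B. qbinomial_transform q h m = 0"
  proof (intro allI impI)
    fix m assume "B \<le> m"
    then have "of_nat q ^ m * qbinomial_transform q h m = 0"
      using diff[of m] Suc.prems(2) by simp
    with q show "qbinomial_transform q h m = 0" by simp
  qed
  ultimately have "qbinomial_transform q h m = 0" for m
    by (rule Suc.IH)
  then have step: "qbinomial_transform q f (Suc m) = qbinomial_transform q f m" for m
    using diff[of m] by simp
  have const: "qbinomial_transform q f m = qbinomial_transform q f 0" for m
    by (induction m) (simp_all add: step)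
  show ?case
    using const[of m] const[of B] Suc.prems(2) by simp
qed

lemma propR_vec:
  assumes "q \<noteq> 0"
  shows "propR (brk_vec q)"
proof (rule propR_intro)
  fix f N B and n :: nat
  assume f_supp: "\<forall>k>N. f k = 0" and vanish: "\<forall>m>B. zeta_transform (brk_vec q) f m = 0"
    and "1 \<le> n"
  have "\<forall>m\<ge>B. qbinomial_transform q f m = 0"
  proof (intro allI impI)
    fix m assume "B \<le> m"
    then show "qbinomial_transform q f m = 0"
      using vanish zeta_transform_vec[of "Suc m" q f] by simp
  qed
  then have "qbinomial_transform q f (n - 1) = 0"
    by (rule qbinomial_transform_eventually_zero[OF assms f_supp])
  with \<open>1 \<le> n\<close> show "zeta_transform (brk_vec q) f n = 0"
    by (simp add: zeta_transform_vec)
qed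

lemma brk_fin_eq_brk_vec_1: "brk_fin = brk_vec 1"
  by (intro ext) (simp add: brk_fin_def brk_vec_def qbinom_1[unfolded One_nat_def])

lemma zeta_transform_ord: "zeta_transform brk_ord f n = (\<Sum>k=1..n. f k)"
  by (subst zeta_transform_antidiagonal[where c="\<lambda>_. 1"]) (simp_all add: brk_ord_def)

lemma not_propR_ord: "\<not> propR brk_ord"
proof
  assume propR: "propR brk_ord"
  define f :: "nat \<Rightarrow> complex" where "f k = (if k = 1 then 1 else if k = 2 then -1 else 0)" for k
  have partial_sums: "zeta_transform brk_ord f n = (if n = 1 then 1 else 0)" for n
    unfolding zeta_transform_ord by (induction n) (auto simp: f_def)
  have "\<exists>n\<ge>1. f n \<noteq> 0" "\<exists>n\<ge>1. zeta_transform brk_ord f n \<noteq> 0"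
    by (auto simp: f_def partial_sums)
  then have "infinite {n. n \<ge> 1 \<and> f n \<noteq> 0}
      \<or> infinite {n. n \<ge> 1 \<and> zeta_transform brk_ord f n \<noteq> 0}"
    using propR[unfolded propR_def, rule_format, of f "zeta_transform brk_ord f"]
    by (simp add: zeta_transform_def)
  moreover have "{n. n \<ge> 1 \<and> f n \<noteq> 0} \<subseteq> {1, 2}"
    "{n. n \<ge> 1 \<and> zeta_transform brk_ord f n \<noteq> 0} = {1}"
    by (auto simp: f_def partial_sums)
  ultimately show False
    using finite_subset by auto
qed

theorem theorem1p8:
  shows "propR brk_div \<and> propR brk_fin
         \<and> (\<forall>q p e. prime (p::nat) \<and> e \<ge> 1 \<and> q = p ^ e \<longrightarrow> propR (brk_vec q))
         \<and> \<not> propR brk_ord"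
proof (intro conjI allI impI)
  show "propR brk_div" by (rule propR_div)
  show "propR brk_fin" unfolding brk_fin_eq_brk_vec_1 by (rule propR_vec) simp
  show "\<not> propR brk_ord" by (rule not_propR_ord)
next
  fix q p e :: nat
  assume "prime p \<and> 1 \<le> e \<and> q = p ^ e"
  then show "propR (brk_vec q)" by (intro propR_vec) (auto simp: prime_gt_0_nat)
qed

end
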